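(* Let $\mathcal X$ be a finite multi-set of real symmetric $2\times2$ matrices. Let $\lambda_1$ be (one of) the largest eigenvalue(s) of $\mathcal X$, $u_1$ the eigenvector associated with $\lambda_1$ and $v_1\perp u_1$ the minor eigenvector of the same matrix of $\mathcal X$, and let $\lambda_2\le\lambda_1$ be the next largest eigenvalue of $\mathcal X$ (the largest element of the eigenvalue multi-set after removing one occurrence of $\lambda_1$). Then $$\mathrm{Sup}_{\mathrm{RLE}}(\mathcal X)=\begin{cases}\lambda_1u_1u_1^{\mathsf T}+\lambda_2v_1v_1^{\mathsf T},&\text{if }\lambda_1\text{ is unique},\\ \lambda_1I,&\text{otherwise}.\end{cases}$$
   Context: $I$ is the $2\times2$ identity. "The eigenvalues of $\mathcal X$" is the multi-set of both eigenvalues of every matrix of $\mathcal X$; unique means occurring exactly once. $\mathrm{Sup}_{\mathrm{LE}}(\mathcal X):=\lim_{m\to\infty}\frac1m\log\sum_{X\in\mathcal X}\exp(mX)$. Write $X_i=\lambda_iu_iu_i^{\mathsf T}+\mu_iv_iv_i^{\mathsf T}$ (spectral form, $\lambda_i\ge\mu_i$, orthonormal $u_i,v_i$). The multi-set of bases $\{\{u_i,v_i\}\}_i$ is generic if for no $i\neq j$ the vector $u_i$ is aligned (equal up to sign) with $u_j$. Families $\mathcal X^{(\delta)}=\{X_1^{(\delta)},\dots,X_n^{(\delta)}\}$ converge planar to $\mathcal X$ if $X_i^{(\delta)}\to X_i$ as $\delta\to0$ and $X_i^{(\delta)}$ has the same eigenvalues as $X_i$ for all $i,\delta$. The relaxed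 log-exp-supremum is $\mathrm{Sup}_{\mathrm{RLE}}(\mathcal X):=\mathrm{Sup}_{\mathrm{LE}}(\mathcal X)$ if the bases of $\mathcal X$ are generic, and otherwise $\mathrm{Sup}_{\mathrm{RLE}}(\mathcal X):=\lim_{\delta\to0}\mathrm{Sup}_{\mathrm{LE}}(\mathcal X^{(\delta)})$ over families $\mathcal X^{(\delta)}$ converging planar to $\mathcal X$ with generic bases. *)

theory Defs
  imports "HOL-Analysis.Analysis"
begin

type_synonym mat2 = "real^2^2"

definition mat2_pow :: "mat2 \<Rightarrow> nat \<Rightarrow> mat2" where
  "mat2_pow A k = ((\<lambda>B. A ** B) ^^ k) (mat 1)"

definition mexp :: "mat2 \<Rightarrow> mat2" where
  "mexp A = (\<Sum>k. (1 / fact k) *\<^sub>R mat2_pow A k)"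

text \<open>Matrix logarithm: the unique real symmetric logarithm (of a symmetric positive definite matrix).\<close>
definition mlog :: "mat2 \<Rightarrow> mat2" where
  "mlog A = (THE L. transpose L = L \<and> mexp L = A)"

definition outer :: "real^2 \<Rightarrow> mat2" where
  "outer w = (\<chi> i j. w $ i * w $ j)"

definition spectral :: "mat2 \<Rightarrow> real \<Rightarrow> real \<Rightarrow> real^2 \<Rightarrow> real^2 \<Rightarrow> bool" where
  "spectral A l m u v \<longleftrightarrow> m \<le> l \<and> norm u = 1 \<and> norm v = 1 \<and> inner u v = 0 \<and>
     A = l *\<^sub>R outer u + m *\<^sub>R outer v"

definition aligned :: "real^2 \<Rightarrow> real^2 \<Rightarrow> bool" where
  "aligned a b \<longleftrightarrow> a = b \<or> a = - b"

definition generic_bases :: "nat \<Rightarrow> (nat \<Rightarrow> real^2) \<Rightarrow> bool" where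
  "generic_bases n u \<longleftrightarrow> (\<forall>i<n. \<forall>j<n. i \<noteq> j \<longrightarrow> \<not> aligned (u i) (u j))"

definition has_generic_bases :: "nat \<Rightarrow> (nat \<Rightarrow> mat2) \<Rightarrow> bool" where
  "has_generic_bases n X \<longleftrightarrow>
     (\<exists>l m u v. (\<forall>i<n. spectral (X i) (l i) (m i) (u i) (v i)) \<and> generic_bases n u)"

definition same_eigs :: "mat2 \<Rightarrow> mat2 \<Rightarrow> bool" where
  "same_eigs A B \<longleftrightarrow> (\<exists>l m u v u' v'. spectral A l m u v \<and> spectral B l m u' v')"

definition has_Sup_LE :: "nat \<Rightarrow> (nat \<Rightarrow> mat2) \<Rightarrow> mat2 \<Rightarrow> bool" where
  "has_Sup_LE n X S \<longleftrightarrow>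
     ((\<lambda>t::real. (1 / t) *\<^sub>R mlog (\<Sum>i<n. mexp (t *\<^sub>R X i))) \<longlongrightarrow> S) at_top"

definition has_Sup_RLE :: "nat \<Rightarrow> (nat \<Rightarrow> mat2) \<Rightarrow> mat2 \<Rightarrow> bool" where
  "has_Sup_RLE n X S \<longleftrightarrow>
     (if has_generic_bases n X then has_Sup_LE n X S
      else (\<forall>Xd :: real \<Rightarrow> nat \<Rightarrow> mat2.
              (\<forall>i<n. ((\<lambda>d. Xd d i) \<longlongrightarrow> X i) (at_right 0)) \<and>
              (\<forall>d>0. \<forall>i<n. same_eigs (Xd d i) (X i)) \<and>
              (\<forall>d>0. has_generic_bases n (Xd d))
              \<longrightarrow> (\<exists>S'. (\<forall>d>0. has_Sup_LE n (Xd d) (S' d)) \<and> (S' \<longlongrightarrow> S) (at_right 0))))"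

end

theory Submission
  imports Defs "HOL-Real_Asymp.Real_Asymp"
begin

text \<open>
  For t > 0 the matrix S(t) = \<Sum>_i exp (t X_i) is again symmetric, and its eigenvalues
  \<alpha>(t) \<ge> \<beta>(t) satisfy \<alpha>(t) \<asymp> exp (t \<lambda>1) (via the trace) and \<beta>(t) \<asymp> exp (t \<lambda>2): from above by
  the quadratic form of S(t) at v1, from below because the two terms carrying \<lambda>1 and \<lambda>2
  form a positive definite quadratic form, their eigenvectors not being aligned. Hence
  (1/t) log S(t) = (ln \<beta> / t) I + ((ln \<alpha> - ln \<beta>) / t) p p^T tends to \<lambda>1 I if \<lambda>2 = \<lambda>1; otherwise
  the major eigenprojection p p^T of exp (-t \<lambda>1) S(t) tends to u1 u1^T, which gives
  \<lambda>1 u1 u1^T + \<lambda>2 v1 v1^T. Written as an affine function of X1, this limit is continuous along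
  planar perturbations, which settles the non-generic case.
\<close>

section \<open>Orthonormal pairs and rank-one projections\<close>

lemma mat2_eq_iff: "(A::mat2) = B \<longleftrightarrow> A$1$1 = B$1$1 \<and> A$1$2 = B$1$2 \<and> A$2$1 = B$2$1 \<and> A$2$2 = B$2$2"
  by (auto simp: vec_eq_iff forall_2)

lemma inner_vec2: "inner (x::real^2) y = x$1 * y$1 + x$2 * y$2"
  by (simp add: inner_vec_def sum_2)

lemma matrix_add_rdistrib: "(A + B) ** C = A ** C + B ** C"
  by (simp add: matrix_matrix_mult_def vec_eq_iff sum.distrib algebra_simps)

lemma transpose_add: "transpose (A + B) = transpose A + transpose B"
  by (simp add: transpose_def vec_eq_iff)

lemma transpose_sum: "transpose (\<Sum>i\<in>I. A i) = (\<Sum>i\<in>I. transpose (A i))"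
  by (simp add: transpose_def vec_eq_iff sum_component)

lemma matrix_vector_mult_sum_left: "(\<Sum>i\<in>I. A i) *v x = (\<Sum>i\<in>I. A i *v x)"
  by (induction I rule: infinite_finite_induct) (simp_all add: matrix_vector_mult_add_rdistrib)

definition orthonormal_pair :: "real^2 \<Rightarrow> real^2 \<Rightarrow> bool" where
  "orthonormal_pair u v \<longleftrightarrow> norm u = 1 \<and> norm v = 1 \<and> inner u v = 0"

lemma outer_add_outer_eq_mat1:
  assumes "orthonormal_pair u v"
  shows "outer u + outer v = mat 1"
proof -
  have "(u$1)^2 + (u$2)^2 = 1" "(v$1)^2 + (v$2)^2 = 1" "u$1 * v$1 + u$2 * v$2 = 0"
    using assms by (simp_all add: orthonormal_pair_def norm_eq_1 inner_vec2 power2_eq_square)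
  then have "(u$1)^2 + (v$1)^2 = 1" "u$1 * u$2 + v$1 * v$2 = 0" "(u$2)^2 + (v$2)^2 = 1"
    by algebra+
  then show ?thesis
    by (simp add: mat2_eq_iff outer_def mat_def power2_eq_square mult.commute)
qed

lemma outer_mult_outer: "outer u ** outer w = inner u w *\<^sub>R (\<chi> i j. u$i * w$j)"
  by (simp add: mat2_eq_iff outer_def matrix_matrix_mult_def sum_2 inner_vec2 algebra_simps)

lemma transpose_outer: "transpose (outer w) = outer w"
  by (simp add: transpose_def outer_def vec_eq_iff mult.commute)

lemma outer_mult_vector: "outer w *v x = inner w x *\<^sub>R w"
  by (simp add: vec_eq_iff forall_2 outer_def matrix_vector_mult_def sum_2 inner_vec2 algebra_simps)

lemma inner_outer_mult_vector: "inner x (outer w *v x) = (inner w x)^2"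
  by (simp add: outer_mult_vector inner_commute power2_eq_square)

lemma norm_outer: "norm (outer w) = (norm w)^2"
proof -
  have "outer w $ i = w$i *\<^sub>R w" for i
    by (simp add: outer_def vec_eq_iff)
  then have "norm (outer w $ i) = norm (w$i) * norm w" for i
    by simp
  then have "norm (outer w) = L2_set (\<lambda>i. norm (w$i) * norm w) UNIV"
    by (simp add: norm_vec_def)
  also have "\<dots> = norm w * norm w"
    by (simp add: L2_set_left_distrib[symmetric] norm_vec_def[of w])
  finally show ?thesis
    by (simp add: power2_eq_square)
qed

lemma orthonormal_pair_sum_sq_inner:
  assumes "orthonormal_pair u v"
  shows "(inner u x)^2 + (inner v x)^2 = (norm x)^2"
proof -
  have "(norm x)^2 = inner x ((outer u + outer v) *v x)"
    by (simp add: outer_add_outer_eq_mat1[OF assms] power2_norm_eq_inner)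
  then show ?thesis
    by (simp add: matrix_vector_mult_add_rdistrib inner_add_right inner_outer_mult_vector)
qed

lemma orthonormal_pair_expansion:
  assumes "orthonormal_pair u v"
  shows "x = inner u x *\<^sub>R u + inner v x *\<^sub>R v"
proof -
  have "x = (outer u + outer v) *v x"
    by (simp add: outer_add_outer_eq_mat1[OF assms])
  then show ?thesis
    by (simp add: matrix_vector_mult_add_rdistrib outer_mult_vector)
qed

section \<open>Spectral calculus of symmetric 2\<times>2 matrices\<close>

lemma spectral_orthonormal_pair: "spectral A l m u v \<Longrightarrow> orthonormal_pair u v"
  by (simp add: spectral_def orthonormal_pair_def)

lemma spectral_transpose: "spectral A l m u v \<Longrightarrow> transpose A = A"
  by (simp add: spectral_def transpose_add transpose_scalar transpose_outer)

lemma spectral_scaleR: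
  "spectral A l m u v \<Longrightarrow> 0 \<le> c \<Longrightarrow> spectral (c *\<^sub>R A) (c * l) (c * m) u v"
  by (auto simp: spectral_def mult_left_mono scaleR_add_right)

lemma spectral_eq_mat1_combination:
  assumes "spectral A l m u v"
  shows "A = m *\<^sub>R mat 1 + (l - m) *\<^sub>R outer u"
proof -
  have "outer v = mat 1 - outer u"
    using outer_add_outer_eq_mat1[OF spectral_orthonormal_pair[OF assms]] by (simp add: algebra_simps)
  then show ?thesis
    using assms by (simp add: spectral_def scaleR_diff_right scaleR_diff_left)
qed

lemma spectral_outer_major:
  assumes "spectral A l m u v" "m < l"
  shows "outer u = (1 / (l - m)) *\<^sub>R (A - m *\<^sub>R mat 1)"
  using spectral_eq_mat1_combination[OF assms(1)] assms(2) by simp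

lemma spectral_outer_minor:
  "spectral A l m u v \<Longrightarrow> outer v = mat 1 - outer u"
  by (metis outer_add_outer_eq_mat1 spectral_orthonormal_pair add_diff_cancel_left')

lemma mat2_pow_spectral:
  assumes "spectral A l m u v"
  shows "mat2_pow A j = l^j *\<^sub>R outer u + m^j *\<^sub>R outer v"
proof (induction j)
  case 0
  show ?case
    using outer_add_outer_eq_mat1[OF spectral_orthonormal_pair[OF assms]] by (simp add: mat2_pow_def)
next
  case (Suc j)
  have "norm u = 1" "norm v = 1" "inner u v = 0"
    using spectral_orthonormal_pair[OF assms] by (simp_all add: orthonormal_pair_def)
  then have "outer u ** outer u = outer u" "outer v ** outer v = outer v"
    "outer u ** outer v = 0" "outer v ** outer u = 0"
    by (simp_all add: outer_mult_outer inner_commute norm_eq_1) (simp_all add: outer_def)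
  moreover have "mat2_pow A (Suc j) = A ** mat2_pow A j"
    by (simp add: mat2_pow_def)
  ultimately show ?case
    using assms Suc by (simp add: spectral_def matrix_add_ldistrib matrix_add_rdistrib
        matrix_scalar_ac scalar_matrix_assoc[symmetric] mult.commute)
qed

lemma mexp_spectral:
  assumes "spectral A l m u v"
  shows "mexp A = exp l *\<^sub>R outer u + exp m *\<^sub>R outer v"
proof -
  have "(\<lambda>j. (1 / fact j) *\<^sub>R mat2_pow A j)
      = (\<lambda>j. (l^j / fact j) *\<^sub>R outer u + (m^j / fact j) *\<^sub>R outer v)"
    by (simp add: mat2_pow_spectral[OF assms] scaleR_add_right)
  moreover have "(\<lambda>j. (l^j / fact j) *\<^sub>R outer u + (m^j / fact j) *\<^sub>R outer v)
      sums (exp l *\<^sub>R outer u + exp m *\<^sub>R outer v)"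
    using exp_converges[of l] exp_converges[of m]
    by (intro sums_add sums_scaleR_left) (simp_all add: divide_inverse mult.commute)
  ultimately show ?thesis
    by (simp add: mexp_def sums_iff)
qed

lemma quadratic_form_spectral:
  "spectral A l m u v \<Longrightarrow> inner x (A *v x) = l * (inner u x)^2 + m * (inner v x)^2"
  by (simp add: spectral_def matrix_vector_mult_add_rdistrib inner_add_right
      inner_outer_mult_vector flip: scaleR_matrix_vector_assoc)

lemma quadratic_form_spectral_bounds:
  assumes "spectral A l m u v" "norm x = 1"
  shows "m \<le> inner x (A *v x)" "inner x (A *v x) \<le> l"
proof -
  have sq: "(inner u x)^2 + (inner v x)^2 = 1"
    using orthonormal_pair_sum_sq_inner[OF spectral_orthonormal_pair[OF assms(1)]] assms(2) by simp
  have "m \<le> l"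
    using assms(1) by (simp add: spectral_def)
  then have "m * (inner u x)^2 \<le> l * (inner u x)^2" "m * (inner v x)^2 \<le> l * (inner v x)^2"
    by (simp_all add: mult_right_mono)
  moreover have "m = m * (inner u x)^2 + m * (inner v x)^2" "l = l * (inner u x)^2 + l * (inner v x)^2"
    using sq by (simp_all add: distrib_left[symmetric])
  ultimately show "m \<le> inner x (A *v x)" "inner x (A *v x) \<le> l"
    unfolding quadratic_form_spectral[OF assms(1)] by linarith+
qed

lemma quadratic_form_spectral_eigenvectors:
  assumes "spectral A l m u v"
  shows "inner u (A *v u) = l" "inner v (A *v v) = m"
  using spectral_orthonormal_pair[OF assms] quadratic_form_spectral[OF assms]
  by (simp_all add: orthonormal_pair_def inner_commute norm_eq_1)

lemma spectral_eigenvalues_unique: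
  assumes "spectral A l m u v" "spectral A l' m' u' v'"
  shows "l' = l" "m' = m"
  using quadratic_form_spectral_bounds[OF assms(1)] quadratic_form_spectral_bounds[OF assms(2)]
    quadratic_form_spectral_eigenvectors[OF assms(1)] quadratic_form_spectral_eigenvectors[OF assms(2)]
    spectral_orthonormal_pair[OF assms(1)] spectral_orthonormal_pair[OF assms(2)]
  unfolding orthonormal_pair_def by (metis order_antisym)+

lemma polar_Ex_nonneg:
  obtains r t :: real where "0 \<le> r" "x = r * cos t" "y = r * sin t"
proof -
  obtain r t where rt: "x = r * cos t" "y = r * sin t"
    using polar_Ex by blast
  show ?thesis
  proof (cases "0 \<le> r")
    case True
    then show ?thesis using rt that by blast
  next
    case False
    then show ?thesis
      using rt that[of "- r" "t + pi"] by (simp add: cos_periodic_pi sin_periodic_pi)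
  qed
qed

lemma spectral_exists:
  assumes "transpose L = L"
  obtains l m u v where "spectral L l m u v"
proof -
  define a c d where "a = L$1$1" and "c = L$1$2" and "d = L$2$2"
  have "L$2$1 = c"
    using arg_cong[OF assms, of "\<lambda>M. M$1$2"] by (simp add: c_def transpose_def)
  obtain r t where r: "0 \<le> r" and rt: "(a - d) / 2 = r * cos t" "c = r * sin t"
    using polar_Ex_nonneg by metis
  \<comment> \<open>Rotation by half the polar angle of ((a - d)/2, c) diagonalises L.\<close>
  define C S where "C = cos (t / 2)" and "S = sin (t / 2)"
  have CS: "C^2 + S^2 = 1" "cos t = C^2 - S^2" "sin t = 2 * S * C"
    using cos_double[of "t/2"] sin_double[of "t/2"] by (simp_all add: C_def S_def)
  define u v :: "real^2" where "u = vector [C, S]" and "v = vector [- S, C]"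
  define l m where "l = (a + d) / 2 + r" and "m = (a + d) / 2 - r"
  have "orthonormal_pair u v"
    using CS(1) by (simp add: orthonormal_pair_def u_def v_def norm_eq_1 inner_vec2 power2_eq_square)
  moreover have "L = l *\<^sub>R outer u + m *\<^sub>R outer v"
  proof -
    have "a = l * C^2 + m * S^2" "c = l * C * S - m * S * C" "d = l * S^2 + m * C^2"
    proof -
      have "l * C^2 + m * S^2 = (a + d) / 2 * (C^2 + S^2) + r * cos t"
        "l * S^2 + m * C^2 = (a + d) / 2 * (C^2 + S^2) - r * cos t"
        "l * C * S - m * S * C = r * sin t"
        unfolding l_def m_def CS(2,3) by (simp_all add: algebra_simps)
      then show "a = l * C^2 + m * S^2" "c = l * C * S - m * S * C" "d = l * S^2 + m * C^2"
        using rt CS(1) by (auto simp: field_simps)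
    qed
    then show ?thesis
      using \<open>L$2$1 = c\<close> by (simp add: mat2_eq_iff outer_def u_def v_def a_def c_def d_def power2_eq_square)
  qed
  ultimately have "spectral L l m u v"
    using r by (simp add: spectral_def orthonormal_pair_def l_def m_def)
  then show ?thesis
    using that by blast
qed

lemma spectral_combination_unique:
  assumes "spectral A l m u v" "spectral A l m u' v'" "l = m \<Longrightarrow> c = c'"
  shows "c *\<^sub>R outer u + c' *\<^sub>R outer v = c *\<^sub>R outer u' + c' *\<^sub>R outer v'"
proof (cases "m < l")
  case True
  then have "outer u' = outer u"
    using spectral_outer_major[OF assms(1)] spectral_outer_major[OF assms(2)] by simp
  then show ?thesis
    using spectral_outer_minor[OF assms(1)] spectral_outer_minor[OF assms(2)] by simp
next
  case False
  then have "c' = c"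
    using assms by (simp add: spectral_def)
  then show ?thesis
    using spectral_outer_minor[OF assms(1)] spectral_outer_minor[OF assms(2)]
    by (simp add: scaleR_diff_right)
qed

lemma mlog_spectral:
  assumes "spectral A a b p q" "0 < b"
  shows "mlog A = ln a *\<^sub>R outer p + ln b *\<^sub>R outer q"
  unfolding mlog_def
proof (rule the_equality)
  have "0 < a"
    using assms by (simp add: spectral_def)
  then have "spectral (ln a *\<^sub>R outer p + ln b *\<^sub>R outer q) (ln a) (ln b) p q"
    using assms by (simp add: spectral_def)
  then show "transpose (ln a *\<^sub>R outer p + ln b *\<^sub>R outer q) = ln a *\<^sub>R outer p + ln b *\<^sub>R outer q
      \<and> mexp (ln a *\<^sub>R outer p + ln b *\<^sub>R outer q) = A"
    using spectral_transpose mexp_spectral assms \<open>0 < a\<close> by (simp add: spectral_def)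
next
  fix L
  assume L: "transpose L = L \<and> mexp L = A"
  then obtain l m x y where sL: "spectral L l m x y"
    using spectral_exists by metis
  then have "spectral A (exp l) (exp m) x y"
    using L mexp_spectral[OF sL] by (simp add: spectral_def)
  then have "exp l = a" "exp m = b" "spectral A a b x y"
    using spectral_eigenvalues_unique[OF assms(1)] by auto
  then show "L = ln a *\<^sub>R outer p + ln b *\<^sub>R outer q"
    using sL spectral_combination_unique[OF _ assms(1), of x y "ln a" "ln b"]
    by (auto simp: spectral_def)
qed

section \<open>The second largest eigenvalue\<close>

lemma second_largest_eigenvalue:
  fixes lam mu :: "nat \<Rightarrow> real"
  assumes k: "k < n" and mu_le_lam: "\<forall>i<n. mu i \<le> lam i"
    and top: "lam k = Max (set_mset (mset (map lam [0..<n] @ map mu [0..<n])))"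
  defines "E \<equiv> mset (map lam [0..<n] @ map mu [0..<n])"
  defines "l2 \<equiv> Max (set_mset (E - {#lam k#}))"
  shows "l2 \<le> lam k"
    and "\<And>i. i < n \<Longrightarrow> i \<noteq> k \<Longrightarrow> lam i \<le> l2"
    and "\<And>i. i < n \<Longrightarrow> mu i \<le> l2"
    and "l2 = mu k \<or> (\<exists>j<n. j \<noteq> k \<and> lam j = l2)"
    and "count E (lam k) = 1 \<longleftrightarrow> l2 < lam k"
proof -
  define R where "R = image_mset lam (mset_set ({..<n} - {k})) + image_mset mu (mset_set {..<n})"
  have "E = image_mset lam (mset_set {..<n}) + image_mset mu (mset_set {..<n})"
    by (simp add: E_def atLeast0LessThan)
  also have "image_mset lam (mset_set {..<n}) = add_mset (lam k) (image_mset lam (mset_set ({..<n} - {k})))"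
    using mset_set.remove[of "{..<n}" k] k by simp
  finally have "E = add_mset (lam k) R"
    by (simp add: R_def)
  then have R: "E - {#lam k#} = R" "set_mset E = insert (lam k) (set_mset R)"
    by simp_all
  have set_R: "set_mset R = lam ` ({..<n} - {k}) \<union> mu ` {..<n}"
    by (simp add: R_def)
  have l2_ge: "x \<le> l2" if "x \<in> set_mset R" for x
    using that by (simp add: l2_def R)
  have l2_in: "l2 \<in> set_mset R"
    unfolding l2_def R using k by (intro Max_in) (auto simp: set_R)
  have top_ge: "x \<le> lam k" if "x \<in> set_mset R" for x
    using that unfolding top E_def[symmetric] by (simp add: R)
  show "l2 \<le> lam k"
    using top_ge l2_in .
  show "\<And>i. i < n \<Longrightarrow> i \<noteq> k \<Longrightarrow> lam i \<le> l2" "\<And>i. i < n \<Longrightarrow> mu i \<le> l2"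
    by (simp_all add: l2_ge set_R)
  show "l2 = mu k \<or> (\<exists>j<n. j \<noteq> k \<and> lam j = l2)"
  proof -
    \<comment> \<open>If l2 = mu j with j \<noteq> k, then mu j \<le> lam j \<le> l2 forces lam j = l2.\<close>
    have "lam j = l2" if "j < n" "j \<noteq> k" "l2 = mu j" for j
      using that mu_le_lam l2_ge[of "lam j"] by (force simp: set_R)
    then show ?thesis
      using l2_in by (auto simp: set_R)
  qed
  have "count E (lam k) = 1 \<longleftrightarrow> lam k \<notin> set_mset R"
    using \<open>E = add_mset (lam k) R\<close> by (simp add: count_eq_zero_iff)
  also have "\<dots> \<longleftrightarrow> l2 < lam k"
    using l2_in l2_ge top_ge[OF l2_in] by (metis order_le_less not_le)
  finally show "count E (lam k) = 1 \<longleftrightarrow> l2 < lam k" .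
qed

lemma sum_sq_inner_lower_bound:
  assumes "orthonormal_pair u v" "norm w = 1" "\<not> aligned w u"
  obtains \<kappa> where "0 < \<kappa>" "\<And>x. norm x = 1 \<Longrightarrow> \<kappa> \<le> (inner u x)^2 + (inner w x)^2"
proof
  have w: "w = inner u w *\<^sub>R u + inner v w *\<^sub>R v"
    using orthonormal_pair_expansion[OF assms(1)] .
  show "0 < (inner v w)^2 / 2"
  proof (rule ccontr)
    assume "\<not> 0 < (inner v w)^2 / 2"
    then have "w = inner u w *\<^sub>R u"
      using w by simp
    moreover have "\<bar>inner u w\<bar> = 1"
      using arg_cong[OF calculation, of norm] assms(1,2) by (simp add: orthonormal_pair_def)
    ultimately show False
      using assms(3) by (auto simp: aligned_def abs_if split: if_splits)
  qed
  fix x :: "real^2"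
  assume "norm x = 1"
  define a b c s where "a = inner u x" and "b = inner v x" and "c = inner u w" and "s = inner v w"
  have "a^2 + b^2 = 1" "c^2 + s^2 = 1"
    using orthonormal_pair_sum_sq_inner[OF assms(1)] \<open>norm x = 1\<close> assms(2)
    by (simp_all add: a_def b_def c_def s_def)
  moreover have "a^2 + (c * a + s * b)^2 - s^2 / 2
      = a^2 * s^2 / 2 + 2 * (c * a + s * b / 2)^2 + a^2 * (1 - c^2 - s^2) + s^2 / 2 * (a^2 + b^2 - 1)"
    by (simp add: field_simps power2_eq_square)
  ultimately have "a^2 + (c * a + s * b)^2 - s^2 / 2 = a^2 * s^2 / 2 + 2 * (c * a + s * b / 2)^2"
    by simp
  moreover have "0 \<le> a^2 * s^2 / 2 + 2 * (c * a + s * b / 2)^2"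
    by simp
  ultimately have "s^2 / 2 \<le> a^2 + (c * a + s * b)^2"
    by linarith
  moreover have "inner w x = c * a + s * b"
    by (subst w) (simp add: inner_add_left a_def b_def c_def s_def)
  ultimately show "(inner v w)^2 / 2 \<le> (inner u x)^2 + (inner w x)^2"
    by (simp only: a_def s_def)
qed

lemma tendsto_exp_mult_neg_at_top: "(c::real) < 0 \<Longrightarrow> ((\<lambda>t. exp (t * c)) \<longlongrightarrow> 0) at_top"
  by real_asymp

lemma tendsto_sum_exp_scaled_at_top:
  fixes A :: "'i \<Rightarrow> 'a::real_normed_vector"
  assumes "finite I" "\<And>i. i \<in> I \<Longrightarrow> c i \<le> 0"
  shows "((\<lambda>t. \<Sum>i\<in>I. exp (t * c i) *\<^sub>R A i) \<longlongrightarrow> (\<Sum>i\<in>{i\<in>I. c i = 0}. A i)) at_top"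
proof -
  have "((\<lambda>t. exp (t * c i) *\<^sub>R A i) \<longlongrightarrow> (if c i = 0 then A i else 0)) at_top" if "i \<in> I" for i
    using tendsto_scaleR[OF tendsto_exp_mult_neg_at_top tendsto_const, of "c i" "A i"] assms(2)[OF that]
    by auto
  then have "((\<lambda>t. \<Sum>i\<in>I. exp (t * c i) *\<^sub>R A i) \<longlongrightarrow> (\<Sum>i\<in>I. if c i = 0 then A i else 0)) at_top"
    by (rule tendsto_sum)
  then show ?thesis
    using assms(1) by (simp add: sum.inter_filter)
qed

lemma tendsto_ln_div_at_top:
  fixes f :: "real \<Rightarrow> real"
  assumes "0 < c" "\<And>t. 0 < t \<Longrightarrow> c * exp (t * l) \<le> f t \<and> f t \<le> C * exp (t * l)"
  shows "((\<lambda>t. ln (f t) / t) \<longlongrightarrow> l) at_top"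
proof (rule tendsto_sandwich)
  show "((\<lambda>t. l + ln c / t) \<longlongrightarrow> l) at_top" "((\<lambda>t. l + ln C / t) \<longlongrightarrow> l) at_top"
    by real_asymp+
  have bounds: "ln c + t * l \<le> ln (f t) \<and> ln (f t) \<le> ln C + t * l" if "0 < t" for t
  proof -
    have pos: "0 < c * exp (t * l)"
      using assms(1) by simp
    then have "0 < C * exp (t * l)" "0 < f t"
      using assms(2)[OF that] by linarith+
    then have "ln (c * exp (t * l)) \<le> ln (f t)" "ln (f t) \<le> ln (C * exp (t * l))"
      using assms(2)[OF that] pos by (simp_all only: ln_le_cancel_iff)
    moreover have "0 < C"
      using \<open>0 < C * exp (t * l)\<close> by (simp add: zero_less_mult_iff)
    ultimately show ?thesis
      using assms(1) by (simp add: ln_mult)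
  qed
  have "l + ln c / t \<le> ln (f t) / t \<and> ln (f t) / t \<le> l + ln C / t" if "0 < t" for t
  proof -
    have "(ln c + t * l) / t \<le> ln (f t) / t" "ln (f t) / t \<le> (ln C + t * l) / t"
      using bounds[OF that] that by (simp_all add: divide_right_mono)
    then show ?thesis
      using that by (simp add: add_divide_distrib)
  qed
  then have "\<forall>\<^sub>F t in at_top. l + ln c / t \<le> ln (f t) / t \<and> ln (f t) / t \<le> l + ln C / t"
    by (rule eventually_mono[OF eventually_gt_at_top[of 0]])
  then show "\<forall>\<^sub>F t in at_top. l + ln c / t \<le> ln (f t) / t" "\<forall>\<^sub>F t in at_top. ln (f t) / t \<le> l + ln C / t"
    by (simp_all add: eventually_conj_iff)
qed

section \<open>Log-sum-exp of a family with a dominant eigenvalue\<close>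

lemma spectral_family_exists:
  assumes "\<And>t. transpose (M t) = M t"
  obtains l m u v where "\<And>t. spectral (M t) (l t) (m t) (u t) (v t)"
proof -
  have "\<forall>t. \<exists>z. spectral (M t) (fst z) (fst (snd z)) (fst (snd (snd z))) (snd (snd (snd z)))"
    using spectral_exists[OF assms] by (metis fst_conv snd_conv)
  then obtain Z where "\<And>t. spectral (M t) (fst (Z t)) (fst (snd (Z t))) (fst (snd (snd (Z t)))) (snd (snd (snd (Z t))))"
    by metis
  then show ?thesis
    by (rule that)
qed

lemma spectral_eigenvalue_sum:
  assumes "spectral A a b p q" "orthonormal_pair e f"
  shows "inner e (A *v e) + inner f (A *v f) = a + b"
proof -
  have "(inner p e)^2 + (inner p f)^2 = 1" "(inner q e)^2 + (inner q f)^2 = 1"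
    using orthonormal_pair_sum_sq_inner[OF assms(2), of p] orthonormal_pair_sum_sq_inner[OF assms(2), of q]
      spectral_orthonormal_pair[OF assms(1)]
    by (simp_all add: orthonormal_pair_def inner_commute)
  then show ?thesis
    unfolding quadratic_form_spectral[OF assms(1)] by (simp add: algebra_simps flip: distrib_left)
qed

text \<open>
  Here l2 is the second largest eigenvalue of the family. Genericity of the bases enters only
  when l2 is the major eigenvalue of another matrix X j: then u j must not be aligned with u k.
\<close>

locale dominant_eigenvalue =
  fixes n k :: nat and X :: "nat \<Rightarrow> mat2" and lam mu :: "nat \<Rightarrow> real"
    and u v :: "nat \<Rightarrow> real^2" and l2 :: real
  assumes spectral: "\<And>i. i < n \<Longrightarrow> spectral (X i) (lam i) (mu i) (u i) (v i)"
    and k: "k < n"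
    and second_le_top: "l2 \<le> lam k"
    and lam_le_second: "\<And>i. i < n \<Longrightarrow> i \<noteq> k \<Longrightarrow> lam i \<le> l2"
    and mu_le_second: "\<And>i. i < n \<Longrightarrow> mu i \<le> l2"
    and second_attained: "l2 = mu k \<or> (\<exists>j<n. j \<noteq> k \<and> lam j = l2 \<and> \<not> aligned (u j) (u k))"
begin

lemma orthonormal: "i < n \<Longrightarrow> orthonormal_pair (u i) (v i)"
  using spectral spectral_orthonormal_pair by blast

lemma lam_le_top: "i < n \<Longrightarrow> lam i \<le> lam k"
  by (cases "i = k") (auto intro: order_trans[OF lam_le_second second_le_top])

lemma mu_le_top: "i < n \<Longrightarrow> mu i \<le> lam k"
  by (rule order_trans[OF mu_le_second second_le_top])

definition expsum :: "real \<Rightarrow> mat2" where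
  "expsum t = (\<Sum>i<n. exp (t * lam i) *\<^sub>R outer (u i) + exp (t * mu i) *\<^sub>R outer (v i))"

definition expsum_trace :: "real \<Rightarrow> real" where
  "expsum_trace t = (\<Sum>i<n. exp (t * lam i) + exp (t * mu i))"

lemma sum_mexp_scaleR: "0 \<le> t \<Longrightarrow> (\<Sum>i<n. mexp (t *\<^sub>R X i)) = expsum t"
  unfolding expsum_def by (intro sum.cong refl mexp_spectral spectral_scaleR spectral) auto

lemma transpose_expsum: "transpose (expsum t) = expsum t"
  by (simp add: expsum_def transpose_sum transpose_add transpose_scalar transpose_outer)

lemma quadratic_form_expsum:
  "inner x (expsum t *v x) = (\<Sum>i<n. exp (t * lam i) * (inner (u i) x)^2 + exp (t * mu i) * (inner (v i) x)^2)"
  by (simp add: expsum_def matrix_vector_mult_sum_left inner_sum_right matrix_vector_mult_add_rdistrib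
      inner_add_right inner_outer_mult_vector flip: scaleR_matrix_vector_assoc)

lemma expsum_eigenvalue_sum:
  assumes "spectral (expsum t) a b p q"
  shows "a + b = expsum_trace t"
proof -
  have "(inner (u i) (u k))^2 + (inner (u i) (v k))^2 = 1" "(inner (v i) (u k))^2 + (inner (v i) (v k))^2 = 1"
    if "i < n" for i
    using orthonormal_pair_sum_sq_inner[OF orthonormal[OF k], of "u i"]
      orthonormal_pair_sum_sq_inner[OF orthonormal[OF k], of "v i"] orthonormal[OF that]
    by (simp_all add: orthonormal_pair_def inner_commute)
  then have "inner (u k) (expsum t *v u k) + inner (v k) (expsum t *v v k) = expsum_trace t"
    by (simp add: quadratic_form_expsum expsum_trace_def flip: sum.distrib)
      (simp add: algebra_simps flip: distrib_left)
  then show ?thesis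
    using spectral_eigenvalue_sum[OF assms orthonormal[OF k]] by simp
qed

lemma expsum_trace_bounds:
  assumes "0 \<le> t"
  shows "exp (t * lam k) \<le> expsum_trace t" "expsum_trace t \<le> 2 * n * exp (t * lam k)"
proof -
  have "exp (t * lam k) \<le> exp (t * lam k) + exp (t * mu k)"
    by simp
  also have "\<dots> \<le> expsum_trace t"
    unfolding expsum_trace_def by (rule member_le_sum) (use k in \<open>auto intro: add_nonneg_nonneg\<close>)
  finally show "exp (t * lam k) \<le> expsum_trace t" .
  have "expsum_trace t \<le> (\<Sum>i<n. 2 * exp (t * lam k))"
    unfolding expsum_trace_def
  proof (intro sum_mono)
    fix i
    assume "i \<in> {..<n}"
    then have "exp (t * lam i) \<le> exp (t * lam k)" "exp (t * mu i) \<le> exp (t * lam k)"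
      using lam_le_top mu_le_top assms by (simp_all add: mult_left_mono)
    then show "exp (t * lam i) + exp (t * mu i) \<le> 2 * exp (t * lam k)"
      by linarith
  qed
  then show "expsum_trace t \<le> 2 * n * exp (t * lam k)"
    by simp
qed

lemma quadratic_form_expsum_minor_upper:
  assumes "0 \<le> t"
  shows "inner (v k) (expsum t *v v k) \<le> n * exp (t * l2)"
proof -
  have "exp (t * lam i) * (inner (u i) (v k))^2 + exp (t * mu i) * (inner (v i) (v k))^2
      \<le> exp (t * l2) * ((inner (u i) (v k))^2 + (inner (v i) (v k))^2)" if "i < n" for i
  proof -
    have "exp (t * lam i) * (inner (u i) (v k))^2 \<le> exp (t * l2) * (inner (u i) (v k))^2"
      using orthonormal[OF k] lam_le_second[OF that] assms
      by (cases "i = k") (simp_all add: orthonormal_pair_def mult_left_mono mult_right_mono)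
    moreover have "exp (t * mu i) * (inner (v i) (v k))^2 \<le> exp (t * l2) * (inner (v i) (v k))^2"
      using mu_le_second[OF that] assms by (simp add: mult_left_mono mult_right_mono)
    ultimately show ?thesis
      by (simp add: distrib_left)
  qed
  moreover have "(inner (u i) (v k))^2 + (inner (v i) (v k))^2 = 1" if "i < n" for i
    using orthonormal_pair_sum_sq_inner[OF orthonormal[OF that], of "v k"] orthonormal[OF k]
    by (simp add: orthonormal_pair_def)
  ultimately have "inner (v k) (expsum t *v v k) \<le> (\<Sum>i<n. exp (t * l2))"
    unfolding quadratic_form_expsum by (intro sum_mono) simp
  then show ?thesis
    by simp
qed

lemma quadratic_form_expsum_ge_partial_sum:
  assumes "J \<subseteq> {..<n}"
  shows "(\<Sum>i\<in>J. exp (t * lam i) * (inner (u i) x)^2 + exp (t * mu i) * (inner (v i) x)^2)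
    \<le> inner x (expsum t *v x)"
  unfolding quadratic_form_expsum using assms by (intro sum_mono2) auto

lemma quadratic_form_expsum_ge_top_term:
  assumes "0 \<le> t"
  shows "exp (t * l2) * (inner (u k) x)^2 + exp (t * mu k) * (inner (v k) x)^2 \<le> inner x (expsum t *v x)"
proof -
  have "exp (t * l2) * (inner (u k) x)^2 \<le> exp (t * lam k) * (inner (u k) x)^2"
    using second_le_top assms by (simp add: mult_left_mono mult_right_mono)
  then show ?thesis
    using quadratic_form_expsum_ge_partial_sum[of "{k}" t x] k by simp
qed

lemma quadratic_form_expsum_lower:
  obtains \<kappa> where "0 < \<kappa>"
    "\<And>t x. 0 \<le> t \<Longrightarrow> norm x = 1 \<Longrightarrow> \<kappa> * exp (t * l2) \<le> inner x (expsum t *v x)"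
  using second_attained
proof (elim disjE exE conjE)
  assume "l2 = mu k"
  have "1 * exp (t * l2) \<le> inner x (expsum t *v x)" if "0 \<le> t" "norm x = 1" for t x
  proof -
    have "exp (t * l2) = exp (t * l2) * (inner (u k) x)^2 + exp (t * l2) * (inner (v k) x)^2"
      using orthonormal_pair_sum_sq_inner[OF orthonormal[OF k], of x] that(2) by (simp flip: distrib_left)
    then show ?thesis
      using quadratic_form_expsum_ge_top_term[OF that(1), of x] \<open>l2 = mu k\<close> by simp
  qed
  then show thesis
    using that(1)[OF zero_less_one] by blast
next
  fix j
  assume j: "j < n" "j \<noteq> k" "lam j = l2" "\<not> aligned (u j) (u k)"
  obtain \<kappa> where \<kappa>: "0 < \<kappa>" "\<And>x. norm x = 1 \<Longrightarrow> \<kappa> \<le> (inner (u k) x)^2 + (inner (u j) x)^2"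
    using sum_sq_inner_lower_bound[OF orthonormal[OF k] _ j(4)] orthonormal[OF j(1)]
    by (auto simp: orthonormal_pair_def)
  have "\<kappa> * exp (t * l2) \<le> inner x (expsum t *v x)" if "0 \<le> t" "norm x = 1" for t x
  proof -
    have "\<kappa> * exp (t * l2) \<le> ((inner (u k) x)^2 + (inner (u j) x)^2) * exp (t * l2)"
      using \<kappa>(2)[OF that(2)] by (rule mult_right_mono) simp
    also have "\<dots> = exp (t * l2) * (inner (u k) x)^2 + exp (t * lam j) * (inner (u j) x)^2"
      using j(3) by (simp add: algebra_simps)
    also have "\<dots> \<le> (\<Sum>i\<in>{k, j}. exp (t * lam i) * (inner (u i) x)^2 + exp (t * mu i) * (inner (v i) x)^2)"
    proof -
      have "exp (t * l2) * (inner (u k) x)^2 \<le> exp (t * lam k) * (inner (u k) x)^2"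
        using second_le_top that(1) by (simp add: mult_left_mono mult_right_mono)
      then show ?thesis
        using j(2) by (simp add: add_increasing2 add_nonneg_nonneg)
    qed
    also have "\<dots> \<le> inner x (expsum t *v x)"
      using j(1) k by (intro quadratic_form_expsum_ge_partial_sum) simp
    finally show ?thesis .
  qed
  then show thesis
    using that(1)[OF \<kappa>(1)] by blast
qed

end

locale dominant_eigenvalue_family = dominant_eigenvalue +
  fixes \<alpha> \<beta> :: "real \<Rightarrow> real" and p q :: "real \<Rightarrow> real^2"
  assumes eig: "\<And>t. spectral (expsum t) (\<alpha> t) (\<beta> t) (p t) (q t)"
begin

lemma minor_eigenvalue_bounds:
  obtains \<kappa> where "0 < \<kappa>" "\<And>t. 0 \<le> t \<Longrightarrow> \<kappa> * exp (t * l2) \<le> \<beta> t \<and> \<beta> t \<le> n * exp (t * l2)"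
proof -
  obtain \<kappa> where \<kappa>: "0 < \<kappa>"
    "\<And>t x. 0 \<le> t \<Longrightarrow> norm x = 1 \<Longrightarrow> \<kappa> * exp (t * l2) \<le> inner x (expsum t *v x)"
    using quadratic_form_expsum_lower by blast
  have lower: "\<kappa> * exp (t * l2) \<le> \<beta> t" if "0 \<le> t" for t
    using \<kappa>(2)[OF that, of "q t"] quadratic_form_spectral_eigenvectors(2)[OF eig]
      spectral_orthonormal_pair[OF eig] by (simp add: orthonormal_pair_def)
  moreover have upper: "\<beta> t \<le> n * exp (t * l2)" if "0 \<le> t" for t
  proof -
    have "\<beta> t \<le> inner (v k) (expsum t *v v k)"
      using quadratic_form_spectral_bounds(1)[OF eig] orthonormal[OF k] by (simp add: orthonormal_pair_def)
    also have "\<dots> \<le> n * exp (t * l2)"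
      by (rule quadratic_form_expsum_minor_upper[OF that])
    finally show ?thesis .
  qed
  show ?thesis
    using lower upper by (intro that[OF \<kappa>(1)]) simp
qed

lemma minor_eigenvalue_pos:
  assumes "0 \<le> t"
  shows "0 < \<beta> t"
proof -
  obtain \<kappa> where "0 < \<kappa>" "\<kappa> * exp (t * l2) \<le> \<beta> t"
    using minor_eigenvalue_bounds assms by blast
  moreover have "0 < \<kappa> * exp (t * l2)"
    using calculation(1) by simp
  ultimately show ?thesis
    by linarith
qed

lemma major_eigenvalue_bounds:
  assumes "0 \<le> t"
  shows "exp (t * lam k) / 2 \<le> \<alpha> t" "\<alpha> t \<le> 2 * n * exp (t * lam k)"
proof -
  have "\<beta> t \<le> \<alpha> t"
    using eig[of t] by (simp add: spectral_def)
  then show "exp (t * lam k) / 2 \<le> \<alpha> t" "\<alpha> t \<le> 2 * n * exp (t * lam k)"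
    using expsum_eigenvalue_sum[OF eig[of t]] expsum_trace_bounds[OF assms] minor_eigenvalue_pos[OF assms]
    by linarith+
qed

lemma tendsto_ln_major_eigenvalue: "((\<lambda>t. ln (\<alpha> t) / t) \<longlongrightarrow> lam k) at_top"
proof (rule tendsto_ln_div_at_top[of "1/2" _ _ "2 * n"])
  fix t :: real
  assume "0 < t"
  then show "1 / 2 * exp (t * lam k) \<le> \<alpha> t \<and> \<alpha> t \<le> 2 * n * exp (t * lam k)"
    using major_eigenvalue_bounds[of t] by simp
qed simp

lemma tendsto_ln_minor_eigenvalue: "((\<lambda>t. ln (\<beta> t) / t) \<longlongrightarrow> l2) at_top"
proof -
  obtain \<kappa> where \<kappa>: "0 < \<kappa>" "\<And>t. 0 \<le> t \<Longrightarrow> \<kappa> * exp (t * l2) \<le> \<beta> t \<and> \<beta> t \<le> n * exp (t * l2)"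
    using minor_eigenvalue_bounds by blast
  show ?thesis
    using \<kappa>(2) by (intro tendsto_ln_div_at_top[OF \<kappa>(1), where C = "real n"]) simp
qed

lemma scaled_mlog_sum_mexp:
  assumes "0 < t"
  shows "(1 / t) *\<^sub>R mlog (\<Sum>i<n. mexp (t *\<^sub>R X i))
    = (ln (\<beta> t) / t) *\<^sub>R mat 1 + (ln (\<alpha> t) / t - ln (\<beta> t) / t) *\<^sub>R outer (p t)"
proof -
  have mlog_eq: "mlog (\<Sum>i<n. mexp (t *\<^sub>R X i)) = ln (\<alpha> t) *\<^sub>R outer (p t) + ln (\<beta> t) *\<^sub>R (mat 1 - outer (p t))"
    using assms sum_mexp_scaleR[of t] mlog_spectral[OF eig minor_eigenvalue_pos[of t]]
    by (simp add: spectral_outer_minor[OF eig])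
  show ?thesis
    unfolding mlog_eq by (simp add: algebra_simps)
qed

lemma tendsto_rescaled_expsum:
  assumes "l2 < lam k"
  shows "((\<lambda>t. exp (- (t * lam k)) *\<^sub>R expsum t) \<longlongrightarrow> outer (u k)) at_top"
    and "((\<lambda>t. exp (- (t * lam k)) * expsum_trace t) \<longlongrightarrow> 1) at_top"
proof -
  have top: "{i \<in> {..<n}. lam i - lam k = 0} = {k}"
    using k lam_le_second assms by force
  have no_mu: "{i. i < n \<and> mu i = lam k} = {}"
    using mu_le_second assms by force
  have lim_lam: "((\<lambda>t. \<Sum>i<n. exp (t * (lam i - lam k)) *\<^sub>R A i) \<longlongrightarrow> A k) at_top"
    for A :: "nat \<Rightarrow> 'a::real_normed_vector"
    using tendsto_sum_exp_scaled_at_top[of "{..<n}" "\<lambda>i. lam i - lam k" A] lam_le_top top by simp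
  have lim_mu: "((\<lambda>t. \<Sum>i<n. exp (t * (mu i - lam k)) *\<^sub>R A i) \<longlongrightarrow> 0) at_top"
    for A :: "nat \<Rightarrow> 'a::real_normed_vector"
    using tendsto_sum_exp_scaled_at_top[of "{..<n}" "\<lambda>i. mu i - lam k" A] mu_le_top no_mu by simp
  have rescale: "exp (- (t * lam k)) * exp (t * c) = exp (t * (c - lam k))" for t c
    by (simp add: mult_exp_exp algebra_simps)
  have "((\<lambda>t. (\<Sum>i<n. exp (t * (lam i - lam k)) *\<^sub>R outer (u i)) + (\<Sum>i<n. exp (t * (mu i - lam k)) *\<^sub>R outer (v i)))
      \<longlongrightarrow> outer (u k) + 0) at_top"
    using lim_lam[of "\<lambda>i. outer (u i)"] lim_mu[of "\<lambda>i. outer (v i)"] by (intro tendsto_add) simp_all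
  then show "((\<lambda>t. exp (- (t * lam k)) *\<^sub>R expsum t) \<longlongrightarrow> outer (u k)) at_top"
    by (simp add: expsum_def scaleR_sum_right scaleR_add_right sum.distrib rescale)
  have "((\<lambda>t. (\<Sum>i<n. exp (t * (lam i - lam k))) + (\<Sum>i<n. exp (t * (mu i - lam k))))
      \<longlongrightarrow> 1 + (0::real)) at_top"
    using lim_lam[of "\<lambda>i. 1::real"] lim_mu[of "\<lambda>i. 1::real"] by (intro tendsto_add) simp_all
  then show "((\<lambda>t. exp (- (t * lam k)) * expsum_trace t) \<longlongrightarrow> 1) at_top"
    by (simp add: expsum_trace_def sum_distrib_left distrib_left sum.distrib rescale)
qed

lemma tendsto_rescaled_minor_eigenvalue:
  assumes "l2 < lam k"
  shows "((\<lambda>t. exp (- (t * lam k)) * \<beta> t) \<longlongrightarrow> 0) at_top"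
proof (rule tendsto_sandwich[OF _ _ tendsto_const])
  obtain \<kappa> where bounds: "\<And>t. 0 \<le> t \<Longrightarrow> \<kappa> * exp (t * l2) \<le> \<beta> t \<and> \<beta> t \<le> n * exp (t * l2)"
    using minor_eigenvalue_bounds by blast
  have "0 \<le> exp (- (t * lam k)) * \<beta> t \<and> exp (- (t * lam k)) * \<beta> t \<le> n * exp (t * (l2 - lam k))"
    if "0 \<le> t" for t
  proof -
    have "exp (- (t * lam k)) * \<beta> t \<le> exp (- (t * lam k)) * (n * exp (t * l2))"
      using bounds[OF that] by simp
    also have "\<dots> = n * exp (t * (l2 - lam k))"
      by (simp add: mult_exp_exp algebra_simps)
    finally show ?thesis
      using minor_eigenvalue_pos[OF that] by simp
  qed
  then have "\<forall>\<^sub>F t in at_top. 0 \<le> exp (- (t * lam k)) * \<beta> t \<and>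
      exp (- (t * lam k)) * \<beta> t \<le> n * exp (t * (l2 - lam k))"
    by (rule eventually_mono[OF eventually_ge_at_top[of 0]])
  then show "\<forall>\<^sub>F t in at_top. 0 \<le> exp (- (t * lam k)) * \<beta> t"
    "\<forall>\<^sub>F t in at_top. exp (- (t * lam k)) * \<beta> t \<le> n * exp (t * (l2 - lam k))"
    by (auto elim!: eventually_mono)
  show "((\<lambda>t. n * exp (t * (l2 - lam k))) \<longlongrightarrow> 0) at_top"
    using assms by (intro tendsto_mult_right_zero tendsto_exp_mult_neg_at_top) simp
qed

lemma tendsto_rescaled_eigenvalue_gap:
  assumes "l2 < lam k"
  shows "((\<lambda>t. exp (- (t * lam k)) * (\<alpha> t - \<beta> t)) \<longlongrightarrow> 1) at_top"
proof -
  have "exp (- (t * lam k)) * (\<alpha> t - \<beta> t)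
      = exp (- (t * lam k)) * expsum_trace t - 2 * (exp (- (t * lam k)) * \<beta> t)" for t
    using expsum_eigenvalue_sum[OF eig, of t, symmetric] by (simp add: algebra_simps)
  then show ?thesis
    using tendsto_diff[OF tendsto_rescaled_expsum(2)[OF assms]
        tendsto_mult_left[OF tendsto_rescaled_minor_eigenvalue[OF assms], of 2]]
    by simp
qed

lemma tendsto_outer_major_eigenvector:
  assumes "l2 < lam k"
  shows "((\<lambda>t. outer (p t)) \<longlongrightarrow> outer (u k)) at_top"
proof -
  define \<epsilon> where "\<epsilon> t = exp (- (t * lam k))" for t
  note gap = tendsto_rescaled_eigenvalue_gap[OF assms, folded \<epsilon>_def]
  \<comment> \<open>The spectral projection (S - \<beta> I) / (\<alpha> - \<beta>), with numerator and denominator rescaled by \<epsilon>.\<close>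
  have "((\<lambda>t. (1 / (\<epsilon> t * (\<alpha> t - \<beta> t))) *\<^sub>R (\<epsilon> t *\<^sub>R expsum t - (\<epsilon> t * \<beta> t) *\<^sub>R mat 1))
      \<longlongrightarrow> (1 / 1) *\<^sub>R (outer (u k) - 0 *\<^sub>R mat 1)) at_top"
    using tendsto_rescaled_expsum(1)[OF assms, folded \<epsilon>_def]
    by (intro tendsto_scaleR[OF tendsto_divide[OF tendsto_const gap]] tendsto_diff
        tendsto_scaleR[OF tendsto_rescaled_minor_eigenvalue[OF assms, folded \<epsilon>_def] tendsto_const]) simp_all
  moreover have "\<forall>\<^sub>F t in at_top.
      (1 / (\<epsilon> t * (\<alpha> t - \<beta> t))) *\<^sub>R (\<epsilon> t *\<^sub>R expsum t - (\<epsilon> t * \<beta> t) *\<^sub>R mat 1) = outer (p t)"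
    using order_tendstoD(1)[OF gap zero_less_one]
  proof eventually_elim
    case (elim t)
    have "0 < \<epsilon> t"
      by (simp add: \<epsilon>_def)
    with elim have "\<beta> t < \<alpha> t"
      by (simp add: zero_less_mult_iff)
    moreover have "\<epsilon> t *\<^sub>R expsum t - (\<epsilon> t * \<beta> t) *\<^sub>R mat 1 = \<epsilon> t *\<^sub>R (expsum t - \<beta> t *\<^sub>R mat 1)"
      by (simp add: scaleR_diff_right)
    ultimately show ?case
      using spectral_outer_major[OF eig] \<open>0 < \<epsilon> t\<close> by simp
  qed
  ultimately show ?thesis
    by (simp add: Lim_transform_eventually)
qed

theorem has_Sup_LE_family:
  "has_Sup_LE n X (if l2 < lam k then lam k *\<^sub>R outer (u k) + l2 *\<^sub>R outer (v k) else lam k *\<^sub>R mat 1)"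
proof -
  let ?F = "\<lambda>t. (ln (\<beta> t) / t) *\<^sub>R mat 1 + (ln (\<alpha> t) / t - ln (\<beta> t) / t) *\<^sub>R outer (p t)"
  have "(?F \<longlongrightarrow> (if l2 < lam k then lam k *\<^sub>R outer (u k) + l2 *\<^sub>R outer (v k) else lam k *\<^sub>R mat 1)) at_top"
  proof (cases "l2 < lam k")
    case True
    have "(?F \<longlongrightarrow> l2 *\<^sub>R mat 1 + (lam k - l2) *\<^sub>R outer (u k)) at_top"
      by (intro tendsto_add tendsto_scaleR tendsto_diff tendsto_const tendsto_ln_minor_eigenvalue
          tendsto_ln_major_eigenvalue tendsto_outer_major_eigenvector True)
    then show ?thesis
      using True by (simp add: spectral_outer_minor[OF spectral[OF k]] algebra_simps)
  next
    case False
    then have "l2 = lam k"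
      using second_le_top by simp
    have "((\<lambda>t. ln (\<alpha> t) / t - ln (\<beta> t) / t) \<longlongrightarrow> 0) at_top"
      using tendsto_diff[OF tendsto_ln_major_eigenvalue tendsto_ln_minor_eigenvalue] \<open>l2 = lam k\<close> by simp
    then have "((\<lambda>t. (ln (\<alpha> t) / t - ln (\<beta> t) / t) *\<^sub>R outer (p t)) \<longlongrightarrow> 0) at_top"
      by (rule tendsto_0_le[where K = 1])
        (use spectral_orthonormal_pair[OF eig] in \<open>simp add: norm_outer orthonormal_pair_def\<close>)
    then have "(?F \<longlongrightarrow> l2 *\<^sub>R mat 1 + 0) at_top"
      by (intro tendsto_add tendsto_scaleR tendsto_ln_minor_eigenvalue tendsto_const)
    then show ?thesis
      using False \<open>l2 = lam k\<close> by simp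
  qed
  moreover have "\<forall>\<^sub>F t in at_top. ?F t = (1 / t) *\<^sub>R mlog (\<Sum>i<n. mexp (t *\<^sub>R X i))"
    using eventually_gt_at_top[of 0] by eventually_elim (simp add: scaled_mlog_sum_mexp)
  ultimately show ?thesis
    unfolding has_Sup_LE_def by (rule Lim_transform_eventually)
qed

end

context dominant_eigenvalue
begin

theorem has_Sup_LE_dominant:
  "has_Sup_LE n X (if l2 < lam k then lam k *\<^sub>R outer (u k) + l2 *\<^sub>R outer (v k) else lam k *\<^sub>R mat 1)"
proof -
  obtain \<alpha> \<beta> p q where eig: "\<And>t. spectral (expsum t) (\<alpha> t) (\<beta> t) (p t) (q t)"
    by (rule spectral_family_exists[of expsum]) (rule transpose_expsum, blast)
  interpret dominant_eigenvalue_family n k X lam mu u v l2 \<alpha> \<beta> p q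
    by (intro dominant_eigenvalue_family.intro dominant_eigenvalue_axioms dominant_eigenvalue_family_axioms.intro eig)
  show ?thesis
    by (rule has_Sup_LE_family)
qed

end

section \<open>The relaxed supremum\<close>

text \<open>
  The limit l u u^T + l2 v v^T, expressed through A = l u u^T + m v v^T itself so that it depends
  continuously on A among matrices with the fixed eigenvalues l and m.
\<close>

definition dominant_limit :: "real \<Rightarrow> real \<Rightarrow> real \<Rightarrow> mat2 \<Rightarrow> mat2" where
  "dominant_limit l m l2 A =
     (if l2 < l then l2 *\<^sub>R mat 1 + ((l - l2) / (l - m)) *\<^sub>R (A - m *\<^sub>R mat 1) else l *\<^sub>R mat 1)"

lemma dominant_limit_spectral:
  assumes "spectral A l m u v" "m \<le> l2"
  shows "dominant_limit l m l2 A = (if l2 < l then l *\<^sub>R outer u + l2 *\<^sub>R outer v else l *\<^sub>R mat 1)"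
proof (cases "l2 < l")
  case True
  have "A - m *\<^sub>R mat 1 = (l - m) *\<^sub>R outer u"
    using spectral_eq_mat1_combination[OF assms(1)] by simp
  then have "dominant_limit l m l2 A = l2 *\<^sub>R mat 1 + (l - l2) *\<^sub>R outer u"
    using True assms(2) by (simp add: dominant_limit_def)
  also have "\<dots> = l *\<^sub>R outer u + l2 *\<^sub>R outer v"
    by (simp add: spectral_outer_minor[OF assms(1)] algebra_simps)
  finally show ?thesis
    using True by simp
qed (simp add: dominant_limit_def)

lemma tendsto_dominant_limit:
  "(A \<longlongrightarrow> A0) F \<Longrightarrow> ((\<lambda>d. dominant_limit l m l2 (A d)) \<longlongrightarrow> dominant_limit l m l2 A0) F"
  unfolding dominant_limit_def by (cases "l2 < l") (simp_all add: tendsto_add tendsto_scaleR tendsto_diff)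

lemma same_eigs_spectral:
  assumes "same_eigs A B" "spectral B l m u v"
  obtains u' v' where "spectral A l m u' v'"
  using assms spectral_eigenvalues_unique unfolding same_eigs_def by metis

lemma has_generic_bases_spectral:
  assumes "has_generic_bases n Y" "\<And>i. i < n \<Longrightarrow> \<exists>u v. spectral (Y i) (lam i) (mu i) u v"
  obtains u v where "\<And>i. i < n \<Longrightarrow> spectral (Y i) (lam i) (mu i) (u i) (v i)" "generic_bases n u"
proof -
  obtain lam' mu' u v where spec: "\<forall>i<n. spectral (Y i) (lam' i) (mu' i) (u i) (v i)" "generic_bases n u"
    using assms(1) unfolding has_generic_bases_def by blast
  have "spectral (Y i) (lam i) (mu i) (u i) (v i)" if i: "i < n" for i
  proof -
    obtain u0 v0 where "spectral (Y i) (lam i) (mu i) u0 v0"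
      using assms(2)[OF i] by blast
    then show ?thesis
      using spec(1) i spectral_eigenvalues_unique by metis
  qed
  then show ?thesis
    using that spec(2) by blast
qed

lemma has_Sup_LE_generic:
  assumes generic: "has_generic_bases n X"
    and eigenvalues: "\<And>i. i < n \<Longrightarrow> \<exists>u v. spectral (X i) (lam i) (mu i) u v"
    and k: "k < n" and "l2 \<le> lam k"
    and "\<And>i. i < n \<Longrightarrow> i \<noteq> k \<Longrightarrow> lam i \<le> l2" "\<And>i. i < n \<Longrightarrow> mu i \<le> l2"
    and attained: "l2 = mu k \<or> (\<exists>j<n. j \<noteq> k \<and> lam j = l2)"
  shows "has_Sup_LE n X (dominant_limit (lam k) (mu k) l2 (X k))"
proof -
  obtain u v where spectral: "\<And>i. i < n \<Longrightarrow> spectral (X i) (lam i) (mu i) (u i) (v i)"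
    and "generic_bases n u"
    using has_generic_bases_spectral[OF generic eigenvalues] by blast
  then interpret dominant_eigenvalue n k X lam mu u v l2
    using assms attained unfolding generic_bases_def by unfold_locales blast+
  show ?thesis
    using has_Sup_LE_dominant dominant_limit_spectral[OF spectral[OF k] mu_le_second[OF k]] by simp
qed

lemma has_Sup_RLE_dominant_limit:
  assumes spectral: "\<And>i. i < n \<Longrightarrow> spectral (X i) (lam i) (mu i) (u i) (v i)"
    and k: "k < n" and second: "l2 \<le> lam k"
    "\<And>i. i < n \<Longrightarrow> i \<noteq> k \<Longrightarrow> lam i \<le> l2" "\<And>i. i < n \<Longrightarrow> mu i \<le> l2"
    "l2 = mu k \<or> (\<exists>j<n. j \<noteq> k \<and> lam j = l2)"
  shows "has_Sup_RLE n X (dominant_limit (lam k) (mu k) l2 (X k))"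
proof (cases "has_generic_bases n X")
  case True
  have "has_Sup_LE n X (dominant_limit (lam k) (mu k) l2 (X k))"
    by (rule has_Sup_LE_generic[where lam = lam and mu = mu, OF True _ k second]) (use spectral in blast)
  then show ?thesis
    using True by (simp add: has_Sup_RLE_def)
next
  case False
  show ?thesis
    unfolding has_Sup_RLE_def if_not_P[OF False]
  proof (intro allI impI, elim conjE)
    fix Xd :: "real \<Rightarrow> nat \<Rightarrow> mat2"
    assume lim: "\<forall>i<n. ((\<lambda>d. Xd d i) \<longlongrightarrow> X i) (at_right 0)"
      and eigs: "\<forall>d>0. \<forall>i<n. same_eigs (Xd d i) (X i)"
      and generic: "\<forall>d>0. has_generic_bases n (Xd d)"
    have "has_Sup_LE n (Xd d) (dominant_limit (lam k) (mu k) l2 (Xd d k))" if d: "0 < d" for d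
    proof (rule has_Sup_LE_generic[where lam = lam and mu = mu, OF generic[rule_format, OF d] _ k second])
      fix i
      assume i: "i < n"
      obtain u' v' where "spectral (Xd d i) (lam i) (mu i) u' v'"
        by (rule same_eigs_spectral[OF eigs[rule_format, OF d i] spectral[OF i]])
      then show "\<exists>u v. spectral (Xd d i) (lam i) (mu i) u v"
        by blast
    qed
    moreover have "((\<lambda>d. dominant_limit (lam k) (mu k) l2 (Xd d k)) \<longlongrightarrow> dominant_limit (lam k) (mu k) l2 (X k))
        (at_right 0)"
      by (rule tendsto_dominant_limit[OF lim[rule_format, OF k]])
    ultimately show "\<exists>S'. (\<forall>d>0. has_Sup_LE n (Xd d) (S' d)) \<and>
        (S' \<longlongrightarrow> dominant_limit (lam k) (mu k) l2 (X k)) (at_right 0)"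
      by (intro exI[of _ "\<lambda>d. dominant_limit (lam k) (mu k) l2 (Xd d k)"] conjI allI impI)
  qed
qed

theorem theorem5:
  fixes n :: nat and X :: "nat \<Rightarrow> mat2"
    and lam mu :: "nat \<Rightarrow> real" and u v :: "nat \<Rightarrow> real^2" and k :: nat
  assumes "n \<ge> 1"
    and "\<forall>i<n. spectral (X i) (lam i) (mu i) (u i) (v i)"
    and "k < n"
    and "lam k = Max (set_mset (mset (map lam [0..<n] @ map mu [0..<n])))"
  shows "let E = mset (map lam [0..<n] @ map mu [0..<n]);
             l1 = lam k;
             l2 = Max (set_mset (E - {#l1#}))
         in has_Sup_RLE n X
              (if count E l1 = 1
               then l1 *\<^sub>R outer (u k) + l2 *\<^sub>R outer (v k)
               else l1 *\<^sub>R mat 1)"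
proof -
  define E where "E = mset (map lam [0..<n] @ map mu [0..<n])"
  define l2 where "l2 = Max (set_mset (E - {#lam k#}))"
  have spectral: "\<And>i. i < n \<Longrightarrow> spectral (X i) (lam i) (mu i) (u i) (v i)"
    using assms(2) by blast
  then have "\<forall>i<n. mu i \<le> lam i"
    by (simp add: spectral_def)
  note second = second_largest_eigenvalue[OF assms(3) this assms(4), folded E_def l2_def]
  have "has_Sup_RLE n X (dominant_limit (lam k) (mu k) l2 (X k))"
    using spectral assms(3) second(1-4) by (rule has_Sup_RLE_dominant_limit)
  then show ?thesis
    unfolding Let_def E_def[symmetric] l2_def[symmetric]
    using dominant_limit_spectral[OF spectral[OF assms(3)] second(3)[OF assms(3)]] second(5) by simp
qed

end
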